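(* Let ${\mathcal{X}}:=(\mathbb{S}^2)^d$ and ${\mathcal{K}}:=(\mathbb{S}^2_+)^d$. Fix $\eta>0$, $\beta\in[0,1)$ and $\lambda_{\max}=\lambda_1\ge\lambda_2\ge\cdots\ge\lambda_d>0$. Define the linear operator ${\mathcal{T}}:{\mathcal{X}}\to{\mathcal{X}}$ blockwise by \[ ({\mathcal{T}}({\bm{W}}))_i={\bm{A}}_i{\bm{W}}_i{\bm{A}}_i^\top+\eta^2\Bigl(\lambda_i^2({\bm{W}}_i)_{11}+\sum_{j=1}^d\lambda_j^2({\bm{W}}_j)_{11}\Bigr){\bm{Q}},\quad i=1,\ldots,d, \] with ${\bm{A}}_i=\begin{bmatrix}1-\eta\lambda_i&-\beta\\ \eta\lambda_i&\beta\end{bmatrix}$, ${\bm{Q}}=\begin{bmatrix}1&-1\\-1&1\end{bmatrix}$, and define $S(\eta,\beta):=\sum_{i=1}^d\frac{\eta\lambda_i}{2(1-\beta)\left(1-\frac{\eta\lambda_i}{1-\beta^2}\right)}$. Then: (a) ${\mathcal{T}}({\mathcal{K}})\subseteq{\mathcal{K}}$; moreover ${\mathcal{T}}$ has an eigenvalue equal to its spectral radius $\rho({\mathcal{T}})$ with an associated eigenvector ${\bm{W}}^\star=({\bm{W}}_1^\star,\ldots,{\bm{W}}_d^\star)\in{\mathcal{K}}\setminus\{{\bm{0}}\}$, and $\rho({\mathcal{T}})\ge\eta^2\sum_{i=1}^d\lambda_i^2>0$ and $\sum_{i=1}^d({\bm{W}}_i^\star)_{11}>0$. (b) $\rho({\mathcal{T}})=1$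 if and only if $\eta\lambda_{\max}<1-\beta^2$ and $S(\eta,\beta)=1$. (c) $\rho({\mathcal{T}})<1$ if and only if $\eta\lambda_{\max}<1-\beta^2$ and $S(\eta,\beta)<1$.
   Context: $\mathbb{S}^2$ denotes the space of real symmetric $2\times2$ matrices and $\mathbb{S}^2_+$ the cone of positive semidefinite ones; $\rho(\cdot)$ denotes spectral radius. *)

theory Defs
  imports "HOL-Analysis.Analysis"
begin

text \<open>A 2x2 matrix given by its entries; index 1 is the first row/column,
  the other element of type 2 is the second.\<close>
definition mat2 :: "'a \<Rightarrow> 'a \<Rightarrow> 'a \<Rightarrow> 'a \<Rightarrow> 'a^2^2" where
  "mat2 a b c e = (\<chi> i j. if i = 1 then (if j = 1 then a else b) else (if j = 1 then c else e))"

definition smult2 :: "'a::times \<Rightarrow> 'a^2^2 \<Rightarrow> 'a^2^2" where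
  "smult2 c M = (\<chi> i j. c * M $ i $ j)"

definition Amat :: "real \<Rightarrow> real \<Rightarrow> real \<Rightarrow> 'a::{comm_ring_1,real_algebra_1}^2^2" where
  "Amat \<eta> \<beta> l = mat2 (of_real (1 - \<eta> * l)) (of_real (- \<beta>)) (of_real (\<eta> * l)) (of_real \<beta>)"

definition Qmat :: "'a::comm_ring_1^2^2" where
  "Qmat = mat2 1 (-1) (-1) 1"

text \<open>The operator T on d-tuples of 2x2 matrices, tuples indexed by 1..d
  (blocks outside 1..d are 0). Defined over real and complex scalars
  (the complex version is the complexification used for the spectral radius).\<close>
definition T_op :: "real \<Rightarrow> real \<Rightarrow> nat \<Rightarrow> (nat \<Rightarrow> real) \<Rightarrow>
    (nat \<Rightarrow> 'a::{comm_ring_1,real_algebra_1}^2^2) \<Rightarrow> nat \<Rightarrow> 'a^2^2" where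
  "T_op \<eta> \<beta> d lam W = (\<lambda>i. if i \<in> {1..d} then
      Amat \<eta> \<beta> (lam i) ** W i ** transpose (Amat \<eta> \<beta> (lam i))
      + smult2 (of_real (\<eta>^2) * (of_real ((lam i)^2) * W i $ 1 $ 1
                 + (\<Sum>j=1..d. of_real ((lam j)^2) * W j $ 1 $ 1))) Qmat
    else 0)"

definition sym_space :: "nat \<Rightarrow> (nat \<Rightarrow> 'a::zero^2^2) set" where
  "sym_space d = {W. \<forall>i. transpose (W i) = W i \<and> (i \<notin> {1..d} \<longrightarrow> W i = 0)}"

definition psd_cone :: "nat \<Rightarrow> (nat \<Rightarrow> real^2^2) set" where
  "psd_cone d = {W. W \<in> sym_space d \<and> (\<forall>i x. 0 \<le> x \<bullet> (W i *v x))}"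

definition spectral_radius_T :: "real \<Rightarrow> real \<Rightarrow> nat \<Rightarrow> (nat \<Rightarrow> real) \<Rightarrow> real" where
  "spectral_radius_T \<eta> \<beta> d lam = Sup {cmod \<mu> | \<mu>. \<exists>W :: nat \<Rightarrow> complex^2^2.
      W \<in> sym_space d \<and> (\<exists>i. W i \<noteq> 0) \<and> T_op \<eta> \<beta> d lam W = (\<lambda>i. smult2 \<mu> (W i))}"

definition S_fun :: "real \<Rightarrow> real \<Rightarrow> nat \<Rightarrow> (nat \<Rightarrow> real) \<Rightarrow> real" where
  "S_fun \<eta> \<beta> d lam = (\<Sum>i=1..d. \<eta> * lam i / (2 * (1 - \<beta>) * (1 - \<eta> * lam i / (1 - \<beta>^2))))"

end

theory Submission
  imports Defs
begin

text \<open>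
  Each block of \<open>T\<close> is a congruence \<open>W \<mapsto> A W A\<^sup>T\<close> plus a nonnegative multiple of the
  positive semidefinite matrix \<open>Q\<close>, so \<open>T\<close> maps the cone into itself.  Its Perron eigenvector can be
  written down: for \<open>\<mu> > \<beta>\<close> there is a one-parameter family of symmetric matrices that
  \<open>W \<mapsto> A W A\<^sup>T + c Q\<close> maps to \<open>\<mu>\<close> times themselves, for \<open>c\<close> proportional to their (1,1)
  entry.  Matching the coupling term \<open>\<Sum>\<^sub>j \<lambda>\<^sub>j\<^sup>2 (W\<^sub>j)\<^sub>1\<^sub>1\<close> across the blocks leaves a scalar
  secular equation in \<open>\<mu>\<close> whose left-hand side is strictly decreasing; its root \<open>r\<close> has a
  positive definite eigenvector.  Domination by an interior eigenvector of a cone-preserving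
  map forces \<open>|\<mu>| \<le> r\<close> for every eigenvalue, so \<open>r = \<rho>(T)\<close>.  At \<open>\<mu> = 1\<close> the secular
  function equals \<open>S(\<eta>, \<beta>)\<close>, and monotonicity compares \<open>r\<close> with 1.
\<close>

section \<open>Real 2x2 matrices\<close>

lemma mat2_nth [simp]:
  "mat2 a b c e $ 1 $ 1 = a" "mat2 a b c e $ 1 $ 2 = b"
  "mat2 a b c e $ 2 $ 1 = c" "mat2 a b c e $ 2 $ 2 = e"
  by (simp_all add: mat2_def)

lemma mat2_eq_iff:
  "(M :: 'a^2^2) = N \<longleftrightarrow> M$1$1 = N$1$1 \<and> M$1$2 = N$1$2 \<and> M$2$1 = N$2$1 \<and> M$2$2 = N$2$2"
  by (auto simp: vec_eq_iff forall_2)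

lemma transpose_nth [simp]: "transpose A $ i $ j = A $ j $ i"
  by (simp add: transpose_def)

lemma smult2_nth [simp]: "smult2 c M $ i $ j = c * M $ i $ j"
  by (simp add: smult2_def)

lemma matrix_mult_2_nth:
  "((A :: 'a::comm_semiring_1^2^2) ** B) $ i $ j = A$i$1 * B$1$j + A$i$2 * B$2$j"
  by (simp add: matrix_matrix_mult_def sum_2)

lemma symmetric_2_iff: "transpose (M :: 'a^2^2) = M \<longleftrightarrow> M$1$2 = M$2$1"
  by (auto simp: mat2_eq_iff)

lemma quadratic_form_2:
  "(x :: real^2) \<bullet> (W *v x)
    = W$1$1 * x$1 * x$1 + W$1$2 * x$1 * x$2 + W$2$1 * x$2 * x$1 + W$2$2 * x$2 * x$2"
  by (simp add: inner_vec_def matrix_vector_mult_def sum_2 algebra_simps)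

lemma quadratic_form_congruence:
  fixes A W :: "real^2^2"
  shows "x \<bullet> ((A ** W ** transpose A) *v x) = (transpose A *v x) \<bullet> (W *v (transpose A *v x))"
  by (simp add: inner_vec_def matrix_mult_2_nth matrix_vector_mult_def sum_2 algebra_simps)

lemma quadratic_form_linear_combination:
  "(x :: real^2) \<bullet> ((c *\<^sub>R A + e *\<^sub>R B) *v x) = c * (x \<bullet> (A *v x)) + e * (x \<bullet> (B *v x))"
  unfolding quadratic_form_2 by (simp add: algebra_simps)

lemma exists_vec2: "\<exists>x :: real^2. x$1 = a \<and> x$2 = b"
  by (rule exI[of _ "\<chi> i. if i = 1 then a else b"]) simp

lemma symmetric_quadratic_form_zero:
  fixes X :: "real^2^2"
  assumes "transpose X = X" and "\<And>x. x \<bullet> (X *v x) = 0"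
  shows "X = 0"
proof -
  obtain e1 :: "real^2" where e1: "e1$1 = 1" "e1$2 = 0" using exists_vec2 by blast
  obtain e2 :: "real^2" where e2: "e2$1 = 0" "e2$2 = 1" using exists_vec2 by blast
  obtain e3 :: "real^2" where e3: "e3$1 = 1" "e3$2 = 1" using exists_vec2 by blast
  have "X$1$1 = 0" using assms(2)[of e1] by (simp add: quadratic_form_2 e1)
  moreover have "X$2$2 = 0" using assms(2)[of e2] by (simp add: quadratic_form_2 e2)
  moreover have "X$1$1 + X$1$2 + X$2$1 + X$2$2 = 0"
    using assms(2)[of e3] by (simp add: quadratic_form_2 e3)
  moreover have "X$1$2 = X$2$1" using assms(1) by (simp add: symmetric_2_iff)
  ultimately show ?thesis by (simp add: mat2_eq_iff)
qed

lemma norm_vec_2_sq: "(norm (x :: real^2))^2 = x$1 * x$1 + x$2 * x$2"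
  by (simp add: power2_norm_eq_inner inner_vec_def sum_2)

lemma pos_def_2:
  fixes X :: "real^2^2"
  assumes "X$1$2 = X$2$1" and "0 < X$1$1" and "0 < det X"
  shows "\<exists>\<delta>>0. \<forall>x. \<delta> * (norm x)^2 \<le> x \<bullet> (X *v x)"
proof -
  let ?t = "X$1$1 + X$2$2"
  have "0 \<le> X$1$2 * X$2$1" using assms(1) by simp
  then have "0 < X$1$1 * X$2$2" using assms(3) unfolding det_2 by linarith
  then have t: "0 < ?t" using assms(2) by (smt (verit) zero_less_mult_iff)
  have "det X * (norm x)^2 \<le> ?t * (x \<bullet> (X *v x))" for x
  proof -
    have "?t * (x \<bullet> (X *v x)) - det X * (norm x)^2
        = (X$1$1 * x$1 + X$1$2 * x$2)^2 + (X$2$1 * x$1 + X$2$2 * x$2)^2"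
      using assms(1) unfolding det_2 quadratic_form_2 norm_vec_2_sq
      by (simp add: algebra_simps power2_eq_square)
    then show ?thesis by (smt (verit) zero_le_power2)
  qed
  then have "\<forall>x. det X / ?t * (norm x)^2 \<le> x \<bullet> (X *v x)"
    using t by (simp add: field_simps)
  then show ?thesis using assms(3) t by (intro exI[of _ "det X / ?t"]) simp
qed

lemma abs_quadratic_form_le:
  fixes X :: "real^'n^'n"
  shows "\<bar>x \<bullet> (X *v x)\<bar> \<le> (\<Sum>i\<in>UNIV. \<Sum>j\<in>UNIV. \<bar>X $ i $ j\<bar>) * (norm x)^2"
proof -
  have "\<bar>x \<bullet> (X *v x)\<bar> \<le> norm x * norm (X *v x)" by (rule Cauchy_Schwarz_ineq2)
  also have "\<dots> \<le> norm x * (onorm ((*v) X) * norm x)"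
    by (intro mult_left_mono onorm) auto
  also have "\<dots> \<le> norm x * ((\<Sum>i\<in>UNIV. \<Sum>j\<in>UNIV. \<bar>X $ i $ j\<bar>) * norm x)"
    by (intro mult_left_mono mult_right_mono onorm_le_matrix_component_sum) auto
  finally show ?thesis by (simp add: power2_eq_square mult_ac)
qed

section \<open>The operator and its cone\<close>

lemma sym_space_outside: "W \<in> sym_space d \<Longrightarrow> i \<notin> {1..d} \<Longrightarrow> W i = 0"
  by (simp add: sym_space_def)

lemma psd_cone_iff:
  "W \<in> psd_cone d \<longleftrightarrow> W \<in> sym_space d \<and> (\<forall>i x. 0 \<le> x \<bullet> (W i *v x))"
  by (simp add: psd_cone_def)

lemma psd_cone_nth_11_nonneg:
  assumes "W \<in> psd_cone d"
  shows "0 \<le> W i $ 1 $ 1"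
proof -
  obtain x :: "real^2" where "x$1 = 1" "x$2 = 0" using exists_vec2 by blast
  moreover have "0 \<le> x \<bullet> (W i *v x)" using assms by (simp add: psd_cone_iff)
  ultimately show ?thesis by (simp add: quadratic_form_2)
qed

lemma T_op_inside:
  "i \<in> {1..d} \<Longrightarrow> T_op \<eta> \<beta> d lam W i = Amat \<eta> \<beta> (lam i) ** W i ** transpose (Amat \<eta> \<beta> (lam i))
      + smult2 (of_real (\<eta>^2) * (of_real ((lam i)^2) * W i $ 1 $ 1
                 + (\<Sum>j=1..d. of_real ((lam j)^2) * W j $ 1 $ 1))) Qmat"
  and T_op_outside: "i \<notin> {1..d} \<Longrightarrow> T_op \<eta> \<beta> d lam W i = 0"
  by (auto simp: T_op_def)

lemma T_op_sym_space: "W \<in> sym_space d \<Longrightarrow> T_op \<eta> \<beta> d lam W \<in> sym_space d"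
  by (auto simp: sym_space_def T_op_def symmetric_2_iff matrix_mult_2_nth Amat_def Qmat_def
      algebra_simps)

lemma T_op_psd_cone:
  assumes W: "W \<in> psd_cone d"
  shows "T_op \<eta> \<beta> d lam W \<in> psd_cone d"
proof -
  have "0 \<le> x \<bullet> (T_op \<eta> \<beta> d lam W i *v x)" for i x
  proof (cases "i \<in> {1..d}")
    case True
    let ?A = "Amat \<eta> \<beta> (lam i) :: real^2^2"
    let ?c = "\<eta>^2 * ((lam i)^2 * W i $ 1 $ 1 + (\<Sum>j=1..d. (lam j)^2 * W j $ 1 $ 1))"
    have "0 \<le> ?c"
      using psd_cone_nth_11_nonneg[OF W]
      by (intro mult_nonneg_nonneg add_nonneg_nonneg sum_nonneg) auto
    moreover have "x \<bullet> (T_op \<eta> \<beta> d lam W i *v x)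
        = (transpose ?A *v x) \<bullet> (W i *v (transpose ?A *v x)) + ?c * (x$1 - x$2)^2"
      unfolding T_op_inside[OF True] quadratic_form_congruence[symmetric]
      by (simp add: quadratic_form_2 Qmat_def algebra_simps power2_eq_square)
    ultimately show ?thesis using W by (simp add: psd_cone_iff)
  qed (simp add: T_op_outside)
  then show ?thesis
    using W by (simp add: psd_cone_iff T_op_sym_space)
qed

lemma T_op_linear_combination:
  fixes X Y :: "nat \<Rightarrow> real^2^2"
  shows "T_op \<eta> \<beta> d lam (\<lambda>i. c *\<^sub>R X i + e *\<^sub>R Y i)
    = (\<lambda>i. c *\<^sub>R T_op \<eta> \<beta> d lam X i + e *\<^sub>R T_op \<eta> \<beta> d lam Y i)"
  by (auto simp: fun_eq_iff T_op_def mat2_eq_iff matrix_mult_2_nth Amat_def Qmat_def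
      sum.distrib sum_distrib_left algebra_simps)

definition of_real_blocks :: "(nat \<Rightarrow> real^2^2) \<Rightarrow> nat \<Rightarrow> complex^2^2" where
  "of_real_blocks X = (\<lambda>i. \<chi> a b. complex_of_real (X i $ a $ b))"

definition Re_rotated :: "complex \<Rightarrow> (nat \<Rightarrow> complex^2^2) \<Rightarrow> nat \<Rightarrow> real^2^2" where
  "Re_rotated \<omega> W = (\<lambda>i. \<chi> a b. Re (\<omega> * W i $ a $ b))"

lemma T_op_of_real_blocks:
  "T_op \<eta> \<beta> d lam (of_real_blocks X) = of_real_blocks (T_op \<eta> \<beta> d lam X)"
  by (auto simp: fun_eq_iff T_op_def of_real_blocks_def mat2_eq_iff matrix_mult_2_nth
      Amat_def Qmat_def)

lemma Re_rotated_block: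
  "(\<chi> a b. Re (\<omega> * (Amat \<eta> \<beta> l ** W ** transpose (Amat \<eta> \<beta> l) + smult2 c Qmat) $ a $ b))
   = Amat \<eta> \<beta> l ** (\<chi> a b. Re (\<omega> * W $ a $ b)) ** transpose (Amat \<eta> \<beta> l) + smult2 (Re (\<omega> * c)) Qmat"
  unfolding mat2_eq_iff by (simp add: matrix_mult_2_nth Amat_def Qmat_def algebra_simps)

lemma T_op_Re_rotated:
  "T_op \<eta> \<beta> d lam (Re_rotated \<omega> W) = Re_rotated \<omega> (T_op \<eta> \<beta> d lam W)"
proof
  fix i
  show "T_op \<eta> \<beta> d lam (Re_rotated \<omega> W) i = Re_rotated \<omega> (T_op \<eta> \<beta> d lam W) i"
  proof (cases "i \<in> {1..d}")
    case True
    let ?c = "of_real (\<eta>^2) * (of_real ((lam i)^2) * W i $ 1 $ 1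
      + (\<Sum>j=1..d. of_real ((lam j)^2) * W j $ 1 $ 1))"
    have "\<omega> * ?c = of_real (\<eta>^2) * (of_real ((lam i)^2) * (\<omega> * W i $ 1 $ 1)
        + (\<Sum>j=1..d. of_real ((lam j)^2) * (\<omega> * W j $ 1 $ 1)))"
      by (simp add: algebra_simps sum_distrib_left)
    moreover have "Re (complex_of_real r * z) = r * Re z" for r z by simp
    ultimately have "Re (\<omega> * ?c)
        = \<eta>^2 * ((lam i)^2 * Re (\<omega> * W i $ 1 $ 1) + (\<Sum>j=1..d. (lam j)^2 * Re (\<omega> * W j $ 1 $ 1)))"
      by (simp only: plus_complex.sel Re_sum)
    then show ?thesis
      using True by (simp only: T_op_inside Re_rotated_def Re_rotated_block vec_lambda_beta) simp
  qed (simp add: T_op_outside Re_rotated_def vec_eq_iff)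
qed

section \<open>Eigenmatrices of a single block\<close>

text \<open>Solving \<open>A W A\<^sup>T + c Q = \<mu> W\<close> entrywise for a symmetric \<open>W\<close> with (1,1) entry \<open>P\<close>, where
  \<open>a = \<eta> \<lambda>\<close>, gives \<open>W = eigen_block \<beta> a \<mu> P\<close> and forces \<open>c = P * forcing_ratio \<beta> a \<mu>\<close>.\<close>

definition forcing_core :: "real \<Rightarrow> real \<Rightarrow> real \<Rightarrow> real" where
  "forcing_core \<beta> a \<mu> = \<mu> + \<beta> - (1 - a + \<beta>)^2 * \<mu> / (\<mu> + \<beta>)"

definition forcing_ratio :: "real \<Rightarrow> real \<Rightarrow> real \<Rightarrow> real" where
  "forcing_ratio \<beta> a \<mu> = (1 - \<beta> / \<mu>) * forcing_core \<beta> a \<mu>"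

definition eigen_block :: "real \<Rightarrow> real \<Rightarrow> real \<Rightarrow> real \<Rightarrow> real^2^2" where
  "eigen_block \<beta> a \<mu> P =
    (let m = (1 - a + \<beta>) * P / (\<mu> + \<beta>) in mat2 P (m - P) (m - P) (P / \<mu> - 2 * m + P))"

lemma eigen_block_eigen:
  assumes "0 < \<mu>" and "0 \<le> \<beta>"
  shows "Amat \<eta> \<beta> l ** eigen_block \<beta> (\<eta> * l) \<mu> P ** transpose (Amat \<eta> \<beta> l)
      + smult2 (P * forcing_ratio \<beta> (\<eta> * l) \<mu>) Qmat
    = \<mu> *\<^sub>R eigen_block \<beta> (\<eta> * l) \<mu> P"
proof -
  define m where "m = (1 - \<eta> * l + \<beta>) * P / (\<mu> + \<beta>)"
  define F where "F = P / \<mu>"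
  have F: "\<mu> * F = P" and m: "(\<mu> + \<beta>) * m = (1 - \<eta> * l + \<beta>) * P"
    using assms by (simp_all add: F_def m_def)
  have c: "P * forcing_ratio \<beta> (\<eta> * l) \<mu>
      = \<mu> * P - ((1 - \<eta> * l + \<beta>)^2 * P - 2 * (1 - \<eta> * l + \<beta>) * \<beta> * m + \<beta>^2 * F)"
  proof -
    have "0 < \<beta> * \<mu> + \<mu> * \<mu>" using assms by (simp add: add_nonneg_pos)
    then have "\<mu> + \<beta> \<noteq> 0" "\<mu> \<noteq> 0" "\<beta> * \<mu> + \<mu> * \<mu> \<noteq> 0" using assms by auto
    then show ?thesis unfolding forcing_ratio_def forcing_core_def m_def F_def
      by (simp add: field_simps) (simp add: algebra_simps power2_eq_square)
  qed
  have blk: "eigen_block \<beta> (\<eta> * l) \<mu> P = mat2 P (m - P) (m - P) (F - 2 * m + P)"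
    by (simp add: eigen_block_def Let_def m_def F_def)
  show ?thesis
    unfolding blk c mat2_eq_iff using F m
    by (simp add: matrix_mult_2_nth Amat_def Qmat_def algebra_simps power2_eq_square)
qed

lemma forcing_core_pos_iff:
  assumes "0 < \<mu>" and "0 \<le> \<beta>"
  shows "0 < forcing_core \<beta> a \<mu> \<longleftrightarrow> (1 - a + \<beta>)^2 * \<mu> < (\<mu> + \<beta>)^2"
proof -
  have p: "0 < \<mu> + \<beta>" using assms by simp
  then have "forcing_core \<beta> a \<mu> = ((\<mu> + \<beta>)^2 - (1 - a + \<beta>)^2 * \<mu>) / (\<mu> + \<beta>)"
    unfolding forcing_core_def by (simp add: field_simps power2_eq_square)
  then show ?thesis using p by (simp add: zero_less_divide_iff)
qed

lemma forcing_ratio_pos_imp_core_pos: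
  assumes "0 \<le> \<beta>" and "\<beta> < \<mu>" and "0 < forcing_ratio \<beta> a \<mu>"
  shows "0 < forcing_core \<beta> a \<mu>"
proof -
  have "0 < 1 - \<beta> / \<mu>" using assms by (simp add: field_simps)
  then show ?thesis using assms(3) by (simp add: forcing_ratio_def zero_less_mult_iff)
qed

lemma forcing_ratio_strict_mono:
  assumes "0 \<le> \<beta>" and "\<beta> < \<mu>" and "\<mu> < \<mu>'" and pos: "0 < forcing_ratio \<beta> a \<mu>"
  shows "forcing_ratio \<beta> a \<mu> < forcing_ratio \<beta> a \<mu>'"
proof -
  define s where "s = (1 - a + \<beta>)^2"
  have p: "0 < \<mu> + \<beta>" "0 < \<mu>' + \<beta>" using assms by auto
  have core_pos: "0 < forcing_core \<beta> a \<mu>"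
    using forcing_ratio_pos_imp_core_pos assms by blast
  \<comment> \<open>the core increases since \<open>s \<beta> \<le> s \<mu> < (\<mu> + \<beta>)\<^sup>2 < (\<mu> + \<beta>) (\<mu>' + \<beta>)\<close>\<close>
  have "s * \<beta> < (\<mu> + \<beta>) * (\<mu>' + \<beta>)"
  proof -
    have "s * \<beta> \<le> s * \<mu>" using assms by (simp add: s_def mult_left_mono)
    also have "\<dots> < (\<mu> + \<beta>)^2"
      using core_pos forcing_core_pos_iff[of \<mu> \<beta> a] assms by (simp add: s_def)
    also have "\<dots> \<le> (\<mu> + \<beta>) * (\<mu>' + \<beta>)" using assms p by (simp add: power2_eq_square)
    finally show ?thesis .
  qed
  moreover have "forcing_core \<beta> a \<mu>' - forcing_core \<beta> a \<mu>
      = (\<mu>' - \<mu>) * ((\<mu> + \<beta>) * (\<mu>' + \<beta>) - s * \<beta>) / ((\<mu> + \<beta>) * (\<mu>' + \<beta>))"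
    using p unfolding forcing_core_def s_def[symmetric] by (simp add: field_simps)
  ultimately have core: "forcing_core \<beta> a \<mu> < forcing_core \<beta> a \<mu>'"
    using p assms(3) by (smt (verit) divide_pos_pos mult_pos_pos)
  have "\<beta> / \<mu>' \<le> \<beta> / \<mu>" using assms by (intro divide_left_mono) auto
  then have f: "0 < 1 - \<beta> / \<mu>" "1 - \<beta> / \<mu> \<le> 1 - \<beta> / \<mu>'"
    using assms by (simp_all add: field_simps)
  have "(1 - \<beta> / \<mu>) * forcing_core \<beta> a \<mu> < (1 - \<beta> / \<mu>) * forcing_core \<beta> a \<mu>'"
    using f core by simp
  also have "\<dots> \<le> (1 - \<beta> / \<mu>') * forcing_core \<beta> a \<mu>'"
    using f core core_pos by (intro mult_right_mono) auto
  finally show ?thesis unfolding forcing_ratio_def .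
qed

lemma sq_less_forcing_ratio_mono:
  assumes "0 \<le> \<beta>" and "\<beta> < \<mu>" and "\<mu> \<le> \<mu>'" and "a^2 < forcing_ratio \<beta> a \<mu>"
  shows "a^2 < forcing_ratio \<beta> a \<mu>'"
proof (cases "\<mu> = \<mu>'")
  case False
  have "0 < forcing_ratio \<beta> a \<mu>" using assms(4) by (smt (verit) zero_le_power2)
  then have "forcing_ratio \<beta> a \<mu> < forcing_ratio \<beta> a \<mu>'"
    using False assms by (intro forcing_ratio_strict_mono) auto
  then show ?thesis using assms(4) by simp
qed (use assms in simp)

lemma forcing_ratio_le:
  assumes "0 \<le> \<beta>" and "\<beta> < \<mu>"
  shows "forcing_ratio \<beta> a \<mu> \<le> (\<mu>^2 - \<beta>^2) / \<mu>"
proof -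
  have p: "0 < \<mu>" "0 < \<mu> + \<beta>" using assms by auto
  have "forcing_ratio \<beta> a \<mu> = (\<mu>^2 - \<beta>^2) / \<mu> - (1 - a + \<beta>)^2 * (\<mu> - \<beta>) / (\<mu> + \<beta>)"
    unfolding forcing_ratio_def forcing_core_def using p
    by (simp add: field_simps) (simp add: algebra_simps power2_eq_square)
  also have "\<dots> \<le> (\<mu>^2 - \<beta>^2) / \<mu>" using assms p by simp
  finally show ?thesis .
qed

lemma eventually_forcing_ratio_ge:
  assumes "0 \<le> \<beta>" and "\<beta> < 1"
  shows "\<forall>\<^sub>F \<mu> in at_top. c \<le> forcing_ratio \<beta> a \<mu>"
  unfolding eventually_at_top_linorder
proof (intro exI allI impI)
  define s where "s = (1 - a + \<beta>)^2"
  fix \<mu> assume \<mu>: "max (max 1 s) (s + c / (1 - \<beta>)) \<le> \<mu>"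
  have p: "0 < \<mu>" "0 < \<mu> + \<beta>" using \<mu> assms by auto
  have "s * \<mu> / (\<mu> + \<beta>) \<le> s" using p assms by (simp add: s_def divide_le_eq mult_left_mono)
  then have core: "\<mu> - s \<le> forcing_core \<beta> a \<mu>"
    unfolding forcing_core_def s_def[symmetric] using assms by simp
  have "\<beta> * 1 \<le> \<beta> * \<mu>" using \<mu> assms by (intro mult_left_mono) auto
  then have "1 - \<beta> \<le> 1 - \<beta> / \<mu>" using p by (simp add: field_simps)
  have "c \<le> (1 - \<beta>) * (\<mu> - s)" using \<mu> assms by (simp add: field_simps)
  also have "\<dots> \<le> (1 - \<beta> / \<mu>) * forcing_core \<beta> a \<mu>"
    using core \<open>1 - \<beta> \<le> 1 - \<beta> / \<mu>\<close> \<mu> assms by (intro mult_mono) auto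
  finally show "c \<le> forcing_ratio \<beta> a \<mu>" unfolding forcing_ratio_def .
qed

lemma forcing_ratio_at_1:
  assumes "0 \<le> \<beta>"
  shows "forcing_ratio \<beta> a 1 - a^2 = 2 * a * (1 - \<beta>^2 - a) / (1 + \<beta>)"
proof -
  have "1 + \<beta> \<noteq> 0" using assms by simp
  then show ?thesis unfolding forcing_ratio_def forcing_core_def
    by (simp add: field_simps) (simp add: algebra_simps power2_eq_square)
qed

lemma continuous_on_forcing_ratio:
  assumes "S \<subseteq> {0<..}" and "0 \<le> \<beta>"
  shows "continuous_on S (forcing_ratio \<beta> a)"
proof -
  have "\<forall>x\<in>S. x \<noteq> 0 \<and> x + \<beta> \<noteq> 0" using assms by force
  then show ?thesis unfolding forcing_ratio_def[abs_def] forcing_core_def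
    by (intro continuous_intros) auto
qed

lemma eigen_block_pos_def:
  assumes "0 \<le> \<beta>" and "\<beta> < \<mu>" and "0 < forcing_ratio \<beta> a \<mu>" and "0 < P"
  shows "\<exists>\<delta>>0. \<forall>x. \<delta> * (norm x)^2 \<le> x \<bullet> (eigen_block \<beta> a \<mu> P *v x)"
proof (rule pos_def_2)
  have p: "0 < \<mu>" "0 < \<mu> + \<beta>" using assms by auto
  have "(1 - a + \<beta>)^2 * \<mu> < (\<mu> + \<beta>)^2"
    using forcing_ratio_pos_imp_core_pos[OF assms(1-3)] forcing_core_pos_iff[OF p(1) assms(1)]
    by simp
  moreover have "det (eigen_block \<beta> a \<mu> P) = P^2 / \<mu> - ((1 - a + \<beta>) * P / (\<mu> + \<beta>))^2"
    by (simp add: det_2 eigen_block_def Let_def algebra_simps power2_eq_square)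
  moreover have "\<dots> = P^2 * ((\<mu> + \<beta>)^2 - (1 - a + \<beta>)^2 * \<mu>) / (\<mu> * (\<mu> + \<beta>)^2)"
    using p by (simp add: power_divide power_mult_distrib field_simps)
      (simp add: algebra_simps power2_eq_square)
  ultimately show "0 < det (eigen_block \<beta> a \<mu> P)"
    using assms(4) p by (simp add: zero_less_divide_iff zero_less_mult_iff)
qed (use assms in \<open>simp_all add: eigen_block_def Let_def\<close>)

section \<open>The secular equation\<close>

lemma continuous_on_Min_image:
  fixes f :: "'i \<Rightarrow> 'a::topological_space \<Rightarrow> 'b::linorder_topology"
  assumes "finite J" and "J \<noteq> {}" and "\<And>j. j \<in> J \<Longrightarrow> continuous_on S (f j)"
  shows "continuous_on S (\<lambda>x. Min ((\<lambda>j. f j x) ` J))"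
  using assms
proof (induction J rule: finite_ne_induct)
  case (insert j J)
  have "continuous_on S (f j)" using insert.prems by simp
  moreover have "continuous_on S (\<lambda>x. Min ((\<lambda>j. f j x) ` J))"
    using insert.prems by (intro insert.IH) auto
  ultimately have "continuous_on S (\<lambda>x. min (f j x) (Min ((\<lambda>j. f j x) ` J)))"
    by (rule continuous_on_min)
  then show ?case using insert by simp
qed simp

definition secular_fun :: "real \<Rightarrow> nat \<Rightarrow> (nat \<Rightarrow> real) \<Rightarrow> real \<Rightarrow> real" where
  "secular_fun \<beta> d a \<mu> = (\<Sum>j=1..d. (a j)^2 / (forcing_ratio \<beta> (a j) \<mu> - (a j)^2))"

lemma secular_fun_strict_antimono:
  assumes "0 \<le> \<beta>" and "\<beta> < \<mu>" and "\<mu> < \<mu>'" and "1 \<le> d"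
    and a: "\<forall>j\<in>{1..d}. 0 < a j \<and> (a j)^2 < forcing_ratio \<beta> (a j) \<mu>"
  shows "secular_fun \<beta> d a \<mu>' < secular_fun \<beta> d a \<mu>"
  unfolding secular_fun_def
proof (rule sum_strict_mono)
  fix j assume j: "j \<in> {1..d}"
  have aj: "0 < a j" "(a j)^2 < forcing_ratio \<beta> (a j) \<mu>" using a j by auto
  then have b: "0 < forcing_ratio \<beta> (a j) \<mu> - (a j)^2" and c: "0 < (a j)^2" by auto
  moreover have "0 < forcing_ratio \<beta> (a j) \<mu>" using aj(2) by (smt (verit) zero_le_power2)
  ultimately have "forcing_ratio \<beta> (a j) \<mu> < forcing_ratio \<beta> (a j) \<mu>'"
    using assms by (intro forcing_ratio_strict_mono) auto
  then have ab: "forcing_ratio \<beta> (a j) \<mu> - (a j)^2 < forcing_ratio \<beta> (a j) \<mu>' - (a j)^2" by simp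
  show "(a j)^2 / (forcing_ratio \<beta> (a j) \<mu>' - (a j)^2)
      < (a j)^2 / (forcing_ratio \<beta> (a j) \<mu> - (a j)^2)"
    using b ab by (intro divide_strict_left_mono[OF ab c] mult_pos_pos) auto
qed (use assms in auto)

lemma continuous_on_secular_fun:
  assumes "S \<subseteq> {0<..}" and "0 \<le> \<beta>"
    and "\<And>\<mu> j. \<mu> \<in> S \<Longrightarrow> j \<in> {1..d} \<Longrightarrow> (a j)^2 < forcing_ratio \<beta> (a j) \<mu>"
  shows "continuous_on S (secular_fun \<beta> d a)"
  unfolding secular_fun_def[abs_def]
proof (intro continuous_on_sum continuous_intros)
  fix j assume "j \<in> {1..d}"
  then show "\<forall>\<mu>\<in>S. forcing_ratio \<beta> (a j) \<mu> - (a j)^2 \<noteq> 0" using assms(3) by force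
qed (use assms continuous_on_forcing_ratio in auto)

lemma secular_fun_le_1:
  assumes "1 \<le> d"
    and a: "\<And>j. j \<in> {1..d} \<Longrightarrow> 0 < a j \<and> (real d + 1) * (a j)^2 \<le> forcing_ratio \<beta> (a j) M"
  shows "secular_fun \<beta> d a M \<le> 1"
proof -
  have "(a j)^2 / (forcing_ratio \<beta> (a j) M - (a j)^2) \<le> 1 / d" if j: "j \<in> {1..d}" for j
  proof -
    have "(a j)^2 / (forcing_ratio \<beta> (a j) M - (a j)^2) \<le> (a j)^2 / (d * (a j)^2)"
      using a[OF j] assms(1) by (intro frac_le) (auto simp: algebra_simps)
    then show ?thesis using a[OF j] by simp
  qed
  then have "secular_fun \<beta> d a M \<le> card {1..d} * (1 / d)"
    unfolding secular_fun_def by (intro sum_bounded_above) auto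
  then show ?thesis using assms(1) by simp
qed

text \<open>At the first point where \<open>min\<^sub>j forcing_ratio / a\<^sub>j\<^sup>2\<close> reaches 3/2, every term of the
  secular function is positive and one of them equals 2.\<close>
lemma forcing_ratio_crossing_exists:
  fixes d :: nat
  assumes "1 \<le> d" and "0 \<le> \<beta>" and "\<beta> < lo" and "lo \<le> M"
    and a: "\<And>j. j \<in> {1..d} \<Longrightarrow> 0 < a j"
    and lo: "j1 \<in> {1..d}" "forcing_ratio \<beta> (a j1) lo \<le> (a j1)^2"
    and M: "\<And>j. j \<in> {1..d} \<Longrightarrow> 2 * (a j)^2 \<le> forcing_ratio \<beta> (a j) M"
  shows "\<exists>\<mu>\<in>{lo..M}. (\<forall>j\<in>{1..d}. 3/2 * (a j)^2 \<le> forcing_ratio \<beta> (a j) \<mu>)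
    \<and> (\<exists>j0\<in>{1..d}. forcing_ratio \<beta> (a j0) \<mu> = 3/2 * (a j0)^2)"
proof -
  define \<psi> where "\<psi> \<mu> = Min ((\<lambda>j. forcing_ratio \<beta> (a j) \<mu> / (a j)^2) ` {1..d})" for \<mu>
  have \<psi>_le: "\<psi> \<mu> \<le> forcing_ratio \<beta> (a j) \<mu> / (a j)^2" if "j \<in> {1..d}" for j \<mu>
    unfolding \<psi>_def using that by (intro Min_le) auto
  have \<psi>_attained: "\<exists>j\<in>{1..d}. \<psi> \<mu> = forcing_ratio \<beta> (a j) \<mu> / (a j)^2" for \<mu>
  proof -
    have "\<psi> \<mu> \<in> (\<lambda>j. forcing_ratio \<beta> (a j) \<mu> / (a j)^2) ` {1..d}"
      unfolding \<psi>_def using \<open>1 \<le> d\<close> by (intro Min_in) auto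
    then show ?thesis by blast
  qed
  have "0 < (a j1)^2" using a[OF lo(1)] by simp
  then have "forcing_ratio \<beta> (a j1) lo / (a j1)^2 \<le> 1" using lo(2) by simp
  then have "\<psi> lo \<le> 3/2" using \<psi>_le[OF lo(1), of lo] by linarith
  moreover have "3/2 \<le> \<psi> M"
  proof -
    obtain j where j: "j \<in> {1..d}" "\<psi> M = forcing_ratio \<beta> (a j) M / (a j)^2"
      using \<psi>_attained by blast
    then have "2 \<le> \<psi> M" using M[OF j(1)] a[OF j(1)] by (simp add: le_divide_eq)
    then show ?thesis by simp
  qed
  moreover have "continuous_on {lo..M} \<psi>"
  proof -
    have "(a j)^2 \<noteq> 0" if "j \<in> {1..d}" for j using a[OF that] by simp
    then show ?thesis
      unfolding \<psi>_def using assms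
      by (intro continuous_on_Min_image continuous_intros continuous_on_forcing_ratio) auto
  qed
  ultimately obtain \<mu> where \<mu>: "lo \<le> \<mu>" "\<mu> \<le> M" "\<psi> \<mu> = 3/2"
    using IVT'[of \<psi> lo "3/2" M] \<open>lo \<le> M\<close> by auto
  have "3/2 * (a j)^2 \<le> forcing_ratio \<beta> (a j) \<mu>" if "j \<in> {1..d}" for j
    using \<psi>_le[OF that, of \<mu>] \<mu>(3) a[OF that] by (simp add: le_divide_eq)
  moreover obtain j0 where j0: "j0 \<in> {1..d}" "\<psi> \<mu> = forcing_ratio \<beta> (a j0) \<mu> / (a j0)^2"
    using \<psi>_attained by blast
  have "forcing_ratio \<beta> (a j0) \<mu> = 3/2 * (a j0)^2"
    using j0(2) \<mu>(3) a[OF j0(1)] by (simp add: field_simps)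
  then have "\<exists>j0\<in>{1..d}. forcing_ratio \<beta> (a j0) \<mu> = 3/2 * (a j0)^2"
    using j0(1) by blast
  ultimately show ?thesis using \<mu>(1,2) by (intro bexI[of _ \<mu>]) auto
qed

lemma secular_fun_ge_1_exists:
  assumes "1 \<le> d" and "0 \<le> \<beta>" and "\<beta> < lo" and "lo \<le> M"
    and a: "\<And>j. j \<in> {1..d} \<Longrightarrow> 0 < a j"
    and lo: "j1 \<in> {1..d}" "forcing_ratio \<beta> (a j1) lo \<le> (a j1)^2"
    and M: "\<And>j. j \<in> {1..d} \<Longrightarrow> 2 * (a j)^2 \<le> forcing_ratio \<beta> (a j) M"
  shows "\<exists>\<mu>\<in>{lo..M}. (\<forall>j\<in>{1..d}. (a j)^2 < forcing_ratio \<beta> (a j) \<mu>) \<and> 1 \<le> secular_fun \<beta> d a \<mu>"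
proof -
  obtain \<mu> j0 where \<mu>: "\<mu> \<in> {lo..M}"
    and ge: "\<And>j. j \<in> {1..d} \<Longrightarrow> 3/2 * (a j)^2 \<le> forcing_ratio \<beta> (a j) \<mu>"
    and j0: "j0 \<in> {1..d}" "forcing_ratio \<beta> (a j0) \<mu> = 3/2 * (a j0)^2"
    using forcing_ratio_crossing_exists[where a = a and d = d, OF assms] by blast
  have above: "(a j)^2 < forcing_ratio \<beta> (a j) \<mu>" if "j \<in> {1..d}" for j
  proof -
    have "0 < (a j)^2" using a[OF that] by simp
    then show ?thesis using ge[OF that] by linarith
  qed
  have half: "forcing_ratio \<beta> (a j0) \<mu> - (a j0)^2 = (a j0)^2 / 2" using j0(2) by simp
  have "1 \<le> (a j0)^2 / (forcing_ratio \<beta> (a j0) \<mu> - (a j0)^2)"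
    unfolding half using a[OF j0(1)] by simp
  also have "\<dots> \<le> secular_fun \<beta> d a \<mu>"
  proof -
    have "0 \<le> (a j)^2 / (forcing_ratio \<beta> (a j) \<mu> - (a j)^2)" if "j \<in> {1..d}" for j
      using above[OF that] by (intro divide_nonneg_pos) auto
    then show ?thesis unfolding secular_fun_def using j0(1) by (intro member_le_sum) auto
  qed
  finally show ?thesis using above \<mu> by (intro bexI[of _ \<mu>]) auto
qed

lemma forcing_ratio_le_sq:
  assumes "0 \<le> \<beta>"
  shows "forcing_ratio \<beta> a (\<beta> + a^2 / 2) \<le> a^2"
proof (cases "a = 0")
  case False
  define lo where "lo = \<beta> + a^2 / 2"
  have "\<beta> < lo" using False by (simp add: lo_def)
  have "forcing_ratio \<beta> a lo \<le> (lo - \<beta>) * ((lo + \<beta>) / lo)"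
    using forcing_ratio_le[OF assms \<open>\<beta> < lo\<close>] by (simp add: power2_eq_square algebra_simps)
  also have "\<dots> \<le> (lo - \<beta>) * 2"
    using assms \<open>\<beta> < lo\<close> by (intro mult_left_mono) (auto simp: divide_le_eq)
  finally show ?thesis by (simp add: lo_def)
qed (simp add: forcing_ratio_def forcing_core_def)

lemma secular_fun_root_exists:
  assumes "1 \<le> d" and "0 \<le> \<beta>" and "\<beta> < 1" and a: "\<And>j. j \<in> {1..d} \<Longrightarrow> 0 < a j"
  shows "\<exists>r>\<beta>. (\<forall>j\<in>{1..d}. (a j)^2 < forcing_ratio \<beta> (a j) r) \<and> secular_fun \<beta> d a r = 1"
proof -
  have one: "1 \<in> {1..d}" using assms by simp
  define lo where "lo = \<beta> + (a 1)^2 / 2"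
  have "\<beta> < lo" using a[OF one] by (simp add: lo_def)
  have lo: "forcing_ratio \<beta> (a 1) lo \<le> (a 1)^2"
    unfolding lo_def using forcing_ratio_le_sq[OF \<open>0 \<le> \<beta>\<close>] .
  have "\<forall>\<^sub>F \<mu> in at_top. lo \<le> \<mu> \<and> (\<forall>j\<in>{1..d}. (real d + 1) * (a j)^2 \<le> forcing_ratio \<beta> (a j) \<mu>)"
    using assms by (intro eventually_conj eventually_ge_at_top eventually_ball_finite ballI
        eventually_forcing_ratio_ge) auto
  then obtain M where M: "lo \<le> M"
    "\<And>j. j \<in> {1..d} \<Longrightarrow> (real d + 1) * (a j)^2 \<le> forcing_ratio \<beta> (a j) M"
    unfolding eventually_at_top_linorder by blast
  have "2 * (a j)^2 \<le> forcing_ratio \<beta> (a j) M" if "j \<in> {1..d}" for j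
  proof -
    have "2 \<le> real d + 1" using \<open>1 \<le> d\<close> by simp
    from mult_right_mono[OF this zero_le_power2[of "a j"]] show ?thesis
      using M(2)[OF that] by linarith
  qed
  then obtain \<mu>1 where \<mu>1: "\<mu>1 \<in> {lo..M}" "\<forall>j\<in>{1..d}. (a j)^2 < forcing_ratio \<beta> (a j) \<mu>1"
      "1 \<le> secular_fun \<beta> d a \<mu>1"
    using secular_fun_ge_1_exists[where a = a and d = d, OF \<open>1 \<le> d\<close> \<open>0 \<le> \<beta>\<close> \<open>\<beta> < lo\<close> M(1) a one lo]
    by blast
  have above: "(a j)^2 < forcing_ratio \<beta> (a j) \<mu>" if "j \<in> {1..d}" "\<mu>1 \<le> \<mu>" for j \<mu>
    using sq_less_forcing_ratio_mono[of \<beta> \<mu>1 \<mu> "a j"] \<mu>1 that \<open>0 \<le> \<beta>\<close> \<open>\<beta> < lo\<close> by auto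
  have "continuous_on {\<mu>1..M} (secular_fun \<beta> d a)"
    using above \<mu>1(1) \<open>0 \<le> \<beta>\<close> \<open>\<beta> < lo\<close> by (intro continuous_on_secular_fun) auto
  moreover have "secular_fun \<beta> d a M \<le> 1"
    using a M(2) \<open>1 \<le> d\<close> by (intro secular_fun_le_1) auto
  ultimately obtain r where "\<mu>1 \<le> r" "secular_fun \<beta> d a r = 1"
    using IVT2'[of "secular_fun \<beta> d a" M 1 \<mu>1] \<mu>1 by auto
  then show ?thesis using above \<mu>1(1) \<open>\<beta> < lo\<close> by (intro exI[of _ r]) auto
qed

lemma sum_sq_le_secular_root:
  assumes "0 \<le> \<beta>" and "\<beta> < r"
    and above: "\<And>j. j \<in> {1..d} \<Longrightarrow> (a j)^2 < forcing_ratio \<beta> (a j) r"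
    and root: "secular_fun \<beta> d a r = 1"
  shows "(\<Sum>j=1..d. (a j)^2) \<le> r"
proof -
  have "(a j)^2 \<le> r * ((a j)^2 / (forcing_ratio \<beta> (a j) r - (a j)^2))" if "j \<in> {1..d}" for j
  proof -
    have "forcing_ratio \<beta> (a j) r \<le> r"
      using forcing_ratio_le[OF assms(1,2)] assms(1,2)
      by (smt (verit) divide_le_eq power2_eq_square zero_le_power2)
    let ?g = "forcing_ratio \<beta> (a j) r - (a j)^2"
    have "?g \<le> r" using \<open>forcing_ratio \<beta> (a j) r \<le> r\<close> zero_le_power2[of "a j"] by linarith
    moreover have "0 < ?g" using above[OF that] by simp
    ultimately have "?g * ((a j)^2 / ?g) \<le> r * ((a j)^2 / ?g)" by (intro mult_right_mono) auto
    then show ?thesis using \<open>0 < ?g\<close> by simp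
  qed
  then have "(\<Sum>j=1..d. (a j)^2) \<le> (\<Sum>j=1..d. r * ((a j)^2 / (forcing_ratio \<beta> (a j) r - (a j)^2)))"
    by (rule sum_mono)
  also have "\<dots> = r * secular_fun \<beta> d a r" unfolding secular_fun_def sum_distrib_left ..
  also have "\<dots> = r" using root by simp
  finally show ?thesis .
qed

lemma sq_less_forcing_ratio_at_1_iff:
  assumes "0 \<le> \<beta>" and "0 < a"
  shows "a^2 < forcing_ratio \<beta> a 1 \<longleftrightarrow> a < 1 - \<beta>^2"
proof -
  have "a^2 < forcing_ratio \<beta> a 1 \<longleftrightarrow> 0 < 2 * a * (1 - \<beta>^2 - a) / (1 + \<beta>)"
    using forcing_ratio_at_1[OF assms(1), of a] by linarith
  also have "\<dots> \<longleftrightarrow> a < 1 - \<beta>^2"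
    using assms by (simp add: zero_less_divide_iff zero_less_mult_iff)
  finally show ?thesis .
qed

lemma all_sq_less_forcing_ratio_at_1_iff:
  fixes d :: nat
  assumes "0 \<le> \<beta>" and "1 \<le> d" and a: "\<And>j. j \<in> {1..d} \<Longrightarrow> 0 < a j \<and> a j \<le> a 1"
  shows "(\<forall>j\<in>{1..d}. (a j)^2 < forcing_ratio \<beta> (a j) 1) \<longleftrightarrow> a 1 < 1 - \<beta>^2"
proof -
  have iff_j: "(a j)^2 < forcing_ratio \<beta> (a j) 1 \<longleftrightarrow> a j < 1 - \<beta>^2" if "j \<in> {1..d}" for j
    using a[OF that] sq_less_forcing_ratio_at_1_iff[OF assms(1)] by blast
  have "1 \<in> {1..d}" using assms by simp
  then show ?thesis using iff_j a by (meson le_less_trans)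
qed

lemma secular_root_compare_1:
  assumes "1 \<le> d" and "0 \<le> \<beta>" and "\<beta> < 1"
    and a: "\<And>j. j \<in> {1..d} \<Longrightarrow> 0 < a j \<and> a j \<le> a 1"
    and "\<beta> < r" and above: "\<forall>j\<in>{1..d}. (a j)^2 < forcing_ratio \<beta> (a j) r"
    and root: "secular_fun \<beta> d a r = 1"
  shows "(r = 1 \<longleftrightarrow> a 1 < 1 - \<beta>^2 \<and> secular_fun \<beta> d a 1 = 1)
    \<and> (r < 1 \<longleftrightarrow> a 1 < 1 - \<beta>^2 \<and> secular_fun \<beta> d a 1 < 1)"
proof -
  have above_1_iff: "(\<forall>j\<in>{1..d}. (a j)^2 < forcing_ratio \<beta> (a j) 1) \<longleftrightarrow> a 1 < 1 - \<beta>^2"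
    using all_sq_less_forcing_ratio_at_1_iff[where a = a and d = d, OF \<open>0 \<le> \<beta>\<close> \<open>1 \<le> d\<close> a] .
  have pos_above: "\<forall>j\<in>{1..d}. 0 < a j \<and> (a j)^2 < forcing_ratio \<beta> (a j) r" using a above by blast
  consider "r < 1" | "r = 1" | "1 < r" by linarith
  then show ?thesis
  proof cases
    case 1
    have "\<forall>j\<in>{1..d}. (a j)^2 < forcing_ratio \<beta> (a j) 1"
      using above 1 \<open>0 \<le> \<beta>\<close> \<open>\<beta> < r\<close> by (auto intro: sq_less_forcing_ratio_mono)
    moreover have "secular_fun \<beta> d a 1 < 1"
      using secular_fun_strict_antimono[OF \<open>0 \<le> \<beta>\<close> \<open>\<beta> < r\<close> 1 \<open>1 \<le> d\<close> pos_above] root by simp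
    ultimately show ?thesis using 1 above_1_iff by auto
  next
    case 2
    then show ?thesis using above above_1_iff root by auto
  next
    case 3
    have "1 < secular_fun \<beta> d a 1" if "a 1 < 1 - \<beta>^2"
    proof -
      have "\<forall>j\<in>{1..d}. 0 < a j \<and> (a j)^2 < forcing_ratio \<beta> (a j) 1"
        using a above_1_iff that by blast
      then have "secular_fun \<beta> d a r < secular_fun \<beta> d a 1"
        by (rule secular_fun_strict_antimono[OF \<open>0 \<le> \<beta>\<close> \<open>\<beta> < 1\<close> 3 \<open>1 \<le> d\<close>])
      then show ?thesis using root by simp
    qed
    then show ?thesis using 3 by auto
  qed
qed

lemma S_fun_eq_secular_fun:
  assumes "0 \<le> \<beta>" and "\<beta> < 1"
    and a: "\<And>j. j \<in> {1..d} \<Longrightarrow> 0 < \<eta> * lam j \<and> \<eta> * lam j < 1 - \<beta>^2"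
  shows "S_fun \<eta> \<beta> d lam = secular_fun \<beta> d (\<lambda>j. \<eta> * lam j) 1"
  unfolding S_fun_def secular_fun_def
proof (rule sum.cong)
  fix j assume "j \<in> {1..d}"
  define x where "x = \<eta> * lam j"
  define c where "c = 1 - \<beta>^2"
  have x: "0 < x" "0 < c - x" using a[OF \<open>j \<in> {1..d}\<close>] by (simp_all add: x_def c_def)
  have \<beta>: "0 < 1 - \<beta>" "0 < 1 + \<beta>" using assms(1,2) by auto
  have c: "1 - \<beta> = c / (1 + \<beta>)" using \<beta> by (simp add: c_def field_simps power2_eq_square)
  have "x / (2 * (1 - \<beta>) * (1 - x / c)) = x * (1 + \<beta>) / (2 * (c - x))"
    unfolding c using \<beta> x by (simp add: field_simps)
  also have "\<dots> = x^2 / (forcing_ratio \<beta> x 1 - x^2)"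
    unfolding forcing_ratio_at_1[OF assms(1)] c_def[symmetric] using \<beta> x
    by (simp add: field_simps power2_eq_square)
  finally show "\<eta> * lam j / (2 * (1 - \<beta>) * (1 - \<eta> * lam j / (1 - \<beta>^2)))
      = (\<eta> * lam j)^2 / (forcing_ratio \<beta> (\<eta> * lam j) 1 - (\<eta> * lam j)^2)"
    by (simp add: x_def c_def)
qed simp

section \<open>The Perron eigenvector and the spectral radius\<close>

text \<open>The (1,1) entries \<open>P\<^sub>i\<close> are normalised so that \<open>\<Sum>\<^sub>j \<lambda>\<^sub>j\<^sup>2 P\<^sub>j\<close> is the secular function.\<close>
definition eigen_tuple :: "real \<Rightarrow> real \<Rightarrow> nat \<Rightarrow> (nat \<Rightarrow> real) \<Rightarrow> real \<Rightarrow> nat \<Rightarrow> real^2^2" where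
  "eigen_tuple \<eta> \<beta> d lam \<mu> = (\<lambda>i. if i \<in> {1..d}
     then eigen_block \<beta> (\<eta> * lam i) \<mu> (\<eta>^2 / (forcing_ratio \<beta> (\<eta> * lam i) \<mu> - (\<eta> * lam i)^2))
     else 0)"

lemma eigen_tuple_nth_11:
  "i \<in> {1..d} \<Longrightarrow>
    eigen_tuple \<eta> \<beta> d lam \<mu> i $ 1 $ 1 = \<eta>^2 / (forcing_ratio \<beta> (\<eta> * lam i) \<mu> - (\<eta> * lam i)^2)"
  by (simp add: eigen_tuple_def eigen_block_def Let_def)

lemma T_op_eigen_tuple:
  assumes "0 < \<mu>" and "0 \<le> \<beta>"
    and above: "\<And>j. j \<in> {1..d} \<Longrightarrow> (\<eta> * lam j)^2 < forcing_ratio \<beta> (\<eta> * lam j) \<mu>"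
    and root: "secular_fun \<beta> d (\<lambda>j. \<eta> * lam j) \<mu> = 1"
  shows "T_op \<eta> \<beta> d lam (eigen_tuple \<eta> \<beta> d lam \<mu>) = (\<lambda>i. \<mu> *\<^sub>R eigen_tuple \<eta> \<beta> d lam \<mu> i)"
proof
  fix i
  let ?V = "eigen_tuple \<eta> \<beta> d lam \<mu>"
  let ?P = "\<lambda>j. \<eta>^2 / (forcing_ratio \<beta> (\<eta> * lam j) \<mu> - (\<eta> * lam j)^2)"
  show "T_op \<eta> \<beta> d lam ?V i = \<mu> *\<^sub>R ?V i"
  proof (cases "i \<in> {1..d}")
    case True
    have "(\<Sum>j=1..d. (lam j)^2 * ?V j $ 1 $ 1) = secular_fun \<beta> d (\<lambda>j. \<eta> * lam j) \<mu>"
      unfolding secular_fun_def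
      by (rule sum.cong) (auto simp: eigen_tuple_nth_11 power_mult_distrib)
    moreover have "\<eta>^2 * ((lam i)^2 * ?P i + 1) = ?P i * forcing_ratio \<beta> (\<eta> * lam i) \<mu>"
      using above[OF True] by (simp add: field_simps power_mult_distrib)
    ultimately have coeff: "of_real (\<eta>^2) * (of_real ((lam i)^2) * ?V i $ 1 $ 1
        + (\<Sum>j=1..d. of_real ((lam j)^2) * ?V j $ 1 $ 1)) = ?P i * forcing_ratio \<beta> (\<eta> * lam i) \<mu>"
      using root True by (simp add: eigen_tuple_nth_11)
    have block: "?V i = eigen_block \<beta> (\<eta> * lam i) \<mu> (?P i)"
      using True by (simp add: eigen_tuple_def)
    show ?thesis
      unfolding T_op_inside[OF True] coeff unfolding block
      by (rule eigen_block_eigen[OF assms(1,2)])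
  qed (auto simp: T_op_outside eigen_tuple_def)
qed

lemma eigen_tuple_pos_def:
  assumes "0 \<le> \<beta>" and "\<beta> < \<mu>" and "\<eta> \<noteq> 0"
    and above: "\<And>j. j \<in> {1..d} \<Longrightarrow> (\<eta> * lam j)^2 < forcing_ratio \<beta> (\<eta> * lam j) \<mu>"
    and i: "i \<in> {1..d}"
  shows "\<exists>\<delta>>0. \<forall>x. \<delta> * (norm x)^2 \<le> x \<bullet> (eigen_tuple \<eta> \<beta> d lam \<mu> i *v x)"
proof -
  have "0 < forcing_ratio \<beta> (\<eta> * lam i) \<mu>"
    using above[OF i] by (smt (verit) zero_le_power2)
  moreover have "0 < \<eta>^2 / (forcing_ratio \<beta> (\<eta> * lam i) \<mu> - (\<eta> * lam i)^2)"
    using above[OF i] \<open>\<eta> \<noteq> 0\<close> by simp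
  ultimately show ?thesis
    using i eigen_block_pos_def[OF assms(1,2)] by (simp add: eigen_tuple_def)
qed

lemma eigen_tuple_psd_cone:
  assumes "0 \<le> \<beta>" and "\<beta> < \<mu>" and "\<eta> \<noteq> 0"
    and above: "\<And>j. j \<in> {1..d} \<Longrightarrow> (\<eta> * lam j)^2 < forcing_ratio \<beta> (\<eta> * lam j) \<mu>"
  shows "eigen_tuple \<eta> \<beta> d lam \<mu> \<in> psd_cone d"
proof -
  have "0 \<le> x \<bullet> (eigen_tuple \<eta> \<beta> d lam \<mu> i *v x)" for i x
  proof (cases "i \<in> {1..d}")
    case True
    then obtain \<delta> where "0 < \<delta>" "\<delta> * (norm x)^2 \<le> x \<bullet> (eigen_tuple \<eta> \<beta> d lam \<mu> i *v x)"
      using eigen_tuple_pos_def[where d = d and lam = lam, OF assms(1-3) above True] by blast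
    then show ?thesis by (smt (verit) mult_nonneg_nonneg zero_le_power2)
  qed (auto simp: eigen_tuple_def)
  then show ?thesis
    by (simp add: psd_cone_iff sym_space_def symmetric_2_iff eigen_tuple_def eigen_block_def
        Let_def)
qed

lemma eigen_tuple_at_secular_root:
  assumes "0 < \<eta>" and "0 \<le> \<beta>" and "\<beta> < r"
    and above: "\<And>j. j \<in> {1..d} \<Longrightarrow> (\<eta> * lam j)^2 < forcing_ratio \<beta> (\<eta> * lam j) r"
    and root: "secular_fun \<beta> d (\<lambda>j. \<eta> * lam j) r = 1"
  shows "eigen_tuple \<eta> \<beta> d lam r \<in> psd_cone d"
    and "T_op \<eta> \<beta> d lam (eigen_tuple \<eta> \<beta> d lam r) = (\<lambda>i. r *\<^sub>R eigen_tuple \<eta> \<beta> d lam r i)"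
    and "\<forall>i\<in>{1..d}. \<exists>\<delta>>0. \<forall>x. \<delta> * (norm x)^2 \<le> x \<bullet> (eigen_tuple \<eta> \<beta> d lam r i *v x)"
    and "\<forall>i\<in>{1..d}. 0 < eigen_tuple \<eta> \<beta> d lam r i $ 1 $ 1"
  using assms(1-3) above root
  by (auto intro!: eigen_tuple_psd_cone[where d = d and lam = lam, OF _ _ _ above]
      T_op_eigen_tuple[where d = d and lam = lam, OF _ _ above]
      eigen_tuple_pos_def[where d = d and lam = lam, OF _ _ _ above] simp: eigen_tuple_nth_11)

definition form_dominated :: "(nat \<Rightarrow> real^2^2) \<Rightarrow> real \<Rightarrow> (nat \<Rightarrow> real^2^2) \<Rightarrow> bool" where
  "form_dominated V C X \<longleftrightarrow> (\<forall>i x. \<bar>x \<bullet> (X i *v x)\<bar> \<le> C * (x \<bullet> (V i *v x)))"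

lemma psd_cone_add_dominated:
  assumes V: "V \<in> psd_cone d" and X: "X \<in> sym_space d" and dom: "form_dominated V C X"
    and s: "\<bar>s\<bar> = 1"
  shows "(\<lambda>i. C *\<^sub>R V i + s *\<^sub>R X i) \<in> psd_cone d"
proof -
  have "0 \<le> x \<bullet> ((C *\<^sub>R V i + s *\<^sub>R X i) *v x)" for i x
  proof -
    have "\<bar>x \<bullet> (X i *v x)\<bar> \<le> C * (x \<bullet> (V i *v x))" using dom by (simp add: form_dominated_def)
    moreover have "s = 1 \<or> s = -1" using s by linarith
    ultimately show ?thesis unfolding quadratic_form_linear_combination by auto
  qed
  moreover have "(\<lambda>i. C *\<^sub>R V i + s *\<^sub>R X i) \<in> sym_space d"
    using V X by (auto simp: psd_cone_iff sym_space_def symmetric_2_iff)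
  ultimately show ?thesis by (simp add: psd_cone_iff)
qed

text \<open>Apply \<open>T\<close> to the cone elements \<open>C V \<plusminus> X\<close>.\<close>
lemma form_dominated_T_op:
  assumes V: "V \<in> psd_cone d" and TV: "T_op \<eta> \<beta> d lam V = (\<lambda>i. r *\<^sub>R V i)"
    and X: "X \<in> sym_space d" and dom: "form_dominated V C X"
  shows "form_dominated V (C * r) (T_op \<eta> \<beta> d lam X)"
proof -
  have "0 \<le> C * r * (x \<bullet> (V i *v x)) + s * (x \<bullet> (T_op \<eta> \<beta> d lam X i *v x))"
    if "\<bar>s\<bar> = 1" for s i x
  proof -
    have "T_op \<eta> \<beta> d lam (\<lambda>i. C *\<^sub>R V i + s *\<^sub>R X i) \<in> psd_cone d"
      using psd_cone_add_dominated[OF V X dom that] by (rule T_op_psd_cone)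
    then show ?thesis
      unfolding T_op_linear_combination TV
      by (simp add: psd_cone_iff quadratic_form_linear_combination)
  qed
  from this[of 1] this[of "-1"] show ?thesis
    unfolding form_dominated_def by (simp add: abs_le_iff) (smt (verit))
qed

lemma Re_rotated_sym_space:
  assumes "W \<in> sym_space d"
  shows "Re_rotated \<omega> W \<in> sym_space d"
  using assms by (auto simp: sym_space_def Re_rotated_def symmetric_2_iff vec_eq_iff)

lemma form_dominated_Re_rotated_exists:
  assumes V: "V \<in> psd_cone d" and W: "W \<in> sym_space d"
    and pd: "\<forall>i\<in>{1..d}. \<exists>\<delta>>0. \<forall>x. \<delta> * (norm x)^2 \<le> x \<bullet> (V i *v x)"
  shows "\<exists>C. \<forall>\<omega>. cmod \<omega> = 1 \<longrightarrow> form_dominated V C (Re_rotated \<omega> W)"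
proof -
  obtain \<delta> where \<delta>: "\<And>i. i \<in> {1..d} \<Longrightarrow> 0 < \<delta> i \<and> (\<forall>x. \<delta> i * (norm x)^2 \<le> x \<bullet> (V i *v x))"
    using pd by metis
  define K where "K i = (\<Sum>a\<in>UNIV. \<Sum>b\<in>UNIV. cmod (W i $ a $ b))" for i
  define C where "C = (\<Sum>i\<in>{1..d}. K i / \<delta> i)"
  have KC: "0 \<le> K i / \<delta> i" "K i / \<delta> i \<le> C" if "i \<in> {1..d}" for i
  proof -
    have nn: "0 \<le> K j / \<delta> j" if "j \<in> {1..d}" for j
      using \<delta>[OF that] by (simp add: K_def sum_nonneg)
    then show "0 \<le> K i / \<delta> i" using that .
    show "K i / \<delta> i \<le> C" unfolding C_def using that nn by (intro member_le_sum) auto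
  qed
  have "\<bar>x \<bullet> (Re_rotated \<omega> W i *v x)\<bar> \<le> C * (x \<bullet> (V i *v x))" if \<omega>: "cmod \<omega> = 1" for \<omega> i x
  proof (cases "i \<in> {1..d}")
    case True
    have entry: "\<bar>Re_rotated \<omega> W i $ a $ b\<bar> \<le> cmod (W i $ a $ b)" for a b
      using abs_Re_le_cmod[of "\<omega> * W i $ a $ b"] \<omega> by (simp add: Re_rotated_def norm_mult)
    have "\<bar>x \<bullet> (Re_rotated \<omega> W i *v x)\<bar> \<le> K i * (norm x)^2"
      using abs_quadratic_form_le[of x "Re_rotated \<omega> W i"] entry
      unfolding K_def by (smt (verit) mult_right_mono sum_mono zero_le_power2)
    also have "\<dots> = K i / \<delta> i * (\<delta> i * (norm x)^2)" using \<delta>[OF True] by simp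
    also have "\<dots> \<le> K i / \<delta> i * (x \<bullet> (V i *v x))"
      using \<delta>[OF True] KC[OF True] by (intro mult_left_mono) auto
    also have "\<dots> \<le> C * (x \<bullet> (V i *v x))"
      using KC[OF True] V by (intro mult_right_mono) (auto simp: psd_cone_iff)
    finally show ?thesis .
  next
    case False
    have "0 \<le> C" unfolding C_def using KC by (intro sum_nonneg) auto
    moreover have "Re_rotated \<omega> W i = 0"
      using sym_space_outside[OF W False] by (simp add: Re_rotated_def vec_eq_iff)
    ultimately show ?thesis using V by (simp add: psd_cone_iff)
  qed
  then show ?thesis unfolding form_dominated_def by blast
qed

lemma form_dominated_Re_rotated_shrink:
  assumes V: "V \<in> psd_cone d" and TV: "T_op \<eta> \<beta> d lam V = (\<lambda>i. r *\<^sub>R V i)"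
    and W: "W \<in> sym_space d" and TW: "T_op \<eta> \<beta> d lam W = (\<lambda>i. smult2 \<mu> (W i))"
    and "\<mu> \<noteq> 0"
    and dom: "\<forall>\<omega>. cmod \<omega> = 1 \<longrightarrow> form_dominated V C (Re_rotated \<omega> W)"
    and \<omega>: "cmod \<omega> = 1"
  shows "form_dominated V (C * r / cmod \<mu>) (Re_rotated \<omega> W)"
proof -
  \<comment> \<open>\<open>Re_rotated \<omega> W\<close> is the image under \<open>T\<close> of another rotation, scaled by \<open>cmod \<mu>\<close>\<close>
  define \<omega>' where "\<omega>' = \<omega> * of_real (cmod \<mu>) / \<mu>"
  have "cmod \<omega>' = 1" using \<omega> \<open>\<mu> \<noteq> 0\<close> by (simp add: \<omega>'_def norm_mult norm_divide)
  then have "form_dominated V (C * r) (T_op \<eta> \<beta> d lam (Re_rotated \<omega>' W))"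
    using dom by (intro form_dominated_T_op[OF V TV Re_rotated_sym_space[OF W]]) auto
  moreover have "T_op \<eta> \<beta> d lam (Re_rotated \<omega>' W) = (\<lambda>i. cmod \<mu> *\<^sub>R Re_rotated \<omega> W i)"
    using \<open>\<mu> \<noteq> 0\<close> unfolding T_op_Re_rotated TW
    by (simp add: Re_rotated_def \<omega>'_def fun_eq_iff vec_eq_iff algebra_simps)
  ultimately show ?thesis
    using \<open>\<mu> \<noteq> 0\<close>
    by (simp add: form_dominated_def scaleR_matrix_vector_assoc[symmetric] abs_mult field_simps)
qed

lemma form_dominated_geometric_zero:
  assumes X: "X \<in> sym_space d" and dom: "\<And>n. form_dominated V (C * \<rho>^n) X"
    and "0 \<le> \<rho>" and "\<rho> < 1"
  shows "X i = 0"
proof -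
  have "x \<bullet> (X i *v x) = 0" for x
  proof -
    have "(\<lambda>n. C * (x \<bullet> (V i *v x)) * \<rho>^n) \<longlonglongrightarrow> 0"
      using assms by (intro tendsto_mult_right_zero LIMSEQ_power_zero) auto
    moreover have "\<bar>x \<bullet> (X i *v x)\<bar> \<le> C * (x \<bullet> (V i *v x)) * \<rho>^n" for n
      using dom[of n] by (simp add: form_dominated_def mult_ac)
    ultimately have "\<bar>x \<bullet> (X i *v x)\<bar> \<le> 0" by (intro LIMSEQ_le_const) auto
    then show ?thesis by simp
  qed
  then show ?thesis
    using X by (auto intro: symmetric_quadratic_form_zero simp: sym_space_def)
qed

text \<open>If \<open>|\<mu>| > r\<close>, the real parts of all rotations of \<open>W\<close> are dominated by
  \<open>C (r / |\<mu>|)\<^sup>n V\<close> for every \<open>n\<close>, hence vanish.\<close>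
lemma eigenvalue_norm_le:
  assumes V: "V \<in> psd_cone d" and TV: "T_op \<eta> \<beta> d lam V = (\<lambda>i. r *\<^sub>R V i)" and "0 \<le> r"
    and pd: "\<forall>i\<in>{1..d}. \<exists>\<delta>>0. \<forall>x. \<delta> * (norm x)^2 \<le> x \<bullet> (V i *v x)"
    and W: "W \<in> sym_space d" and nz: "\<exists>i. W i \<noteq> 0"
    and TW: "T_op \<eta> \<beta> d lam W = (\<lambda>i. smult2 \<mu> (W i))"
  shows "cmod \<mu> \<le> r"
proof (rule ccontr)
  assume "\<not> cmod \<mu> \<le> r"
  then have \<mu>: "\<mu> \<noteq> 0" "r / cmod \<mu> < 1" using \<open>0 \<le> r\<close> by (auto simp: divide_less_eq)
  obtain C where dom0: "\<forall>\<omega>. cmod \<omega> = 1 \<longrightarrow> form_dominated V C (Re_rotated \<omega> W)"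
    using form_dominated_Re_rotated_exists[OF V W pd] by blast
  have dom: "\<forall>\<omega>. cmod \<omega> = 1 \<longrightarrow> form_dominated V (C * (r / cmod \<mu>)^n) (Re_rotated \<omega> W)" for n
  proof (induction n)
    case (Suc n)
    have "C * (r / cmod \<mu>)^Suc n = C * (r / cmod \<mu>)^n * r / cmod \<mu>" by simp
    then show ?case
      using form_dominated_Re_rotated_shrink[OF V TV W TW \<mu>(1) Suc.IH] by presburger
  qed (simp add: dom0)
  have "Re_rotated \<omega> W i = 0" if "cmod \<omega> = 1" for \<omega> i
    using dom that \<mu> \<open>0 \<le> r\<close>
    by (intro form_dominated_geometric_zero[OF Re_rotated_sym_space[OF W], of V C "r / cmod \<mu>"])
      auto
  from this[of 1] this[of "- \<i>"] have "W i = 0" for i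
    by (auto simp: Re_rotated_def vec_eq_iff complex_eq_iff)
  then show False using nz by simp
qed

lemma spectral_radius_T_eq:
  assumes V: "V \<in> psd_cone d" and TV: "T_op \<eta> \<beta> d lam V = (\<lambda>i. r *\<^sub>R V i)" and "0 \<le> r"
    and pd: "\<forall>i\<in>{1..d}. \<exists>\<delta>>0. \<forall>x. \<delta> * (norm x)^2 \<le> x \<bullet> (V i *v x)"
    and nz: "\<exists>i. V i \<noteq> 0"
  shows "spectral_radius_T \<eta> \<beta> d lam = r"
  unfolding spectral_radius_T_def
proof (rule cSup_eq_maximum)
  have "of_real_blocks V \<in> sym_space d"
    using V by (auto simp: psd_cone_iff sym_space_def of_real_blocks_def symmetric_2_iff vec_eq_iff)
  moreover have "\<exists>i. of_real_blocks V i \<noteq> 0"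
    using nz by (auto simp: of_real_blocks_def vec_eq_iff)
  moreover have "T_op \<eta> \<beta> d lam (of_real_blocks V) = (\<lambda>i. smult2 (of_real r) (of_real_blocks V i))"
    unfolding T_op_of_real_blocks TV by (simp add: of_real_blocks_def fun_eq_iff vec_eq_iff)
  ultimately show "r \<in> {cmod \<mu> | \<mu>. \<exists>W :: nat \<Rightarrow> complex^2^2. W \<in> sym_space d \<and> (\<exists>i. W i \<noteq> 0)
      \<and> T_op \<eta> \<beta> d lam W = (\<lambda>i. smult2 \<mu> (W i))}"
    using \<open>0 \<le> r\<close> by (intro CollectI exI[of _ "of_real r"]) auto
qed (use eigenvalue_norm_le[OF V TV \<open>0 \<le> r\<close> pd] in blast)

lemma spectral_radius_T_eq_secular_root:
  assumes "1 \<le> d" and "0 < \<eta>" and "0 \<le> \<beta>" and "\<beta> < r"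
    and above: "\<And>j. j \<in> {1..d} \<Longrightarrow> (\<eta> * lam j)^2 < forcing_ratio \<beta> (\<eta> * lam j) r"
    and root: "secular_fun \<beta> d (\<lambda>j. \<eta> * lam j) r = 1"
  shows "spectral_radius_T \<eta> \<beta> d lam = r"
proof -
  note V = eigen_tuple_at_secular_root[OF assms(2-4) above root]
  have "eigen_tuple \<eta> \<beta> d lam r 1 \<noteq> 0" using V(4) assms(1) by force
  then show ?thesis using V(1-3) assms(3,4) by (intro spectral_radius_T_eq) auto
qed

lemma secular_root_compare_S_fun:
  assumes "1 \<le> d" and "0 \<le> \<beta>" and "\<beta> < 1"
    and a: "\<And>j. j \<in> {1..d} \<Longrightarrow> 0 < \<eta> * lam j \<and> \<eta> * lam j \<le> \<eta> * lam 1"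
    and "\<beta> < r" and above: "\<And>j. j \<in> {1..d} \<Longrightarrow> (\<eta> * lam j)^2 < forcing_ratio \<beta> (\<eta> * lam j) r"
    and root: "secular_fun \<beta> d (\<lambda>j. \<eta> * lam j) r = 1"
  shows "(r = 1 \<longleftrightarrow> \<eta> * lam 1 < 1 - \<beta>^2 \<and> S_fun \<eta> \<beta> d lam = 1)
    \<and> (r < 1 \<longleftrightarrow> \<eta> * lam 1 < 1 - \<beta>^2 \<and> S_fun \<eta> \<beta> d lam < 1)"
proof -
  have "\<eta> * lam 1 < 1 - \<beta>^2 \<Longrightarrow> S_fun \<eta> \<beta> d lam = secular_fun \<beta> d (\<lambda>j. \<eta> * lam j) 1"
    using a assms(2,3) by (intro S_fun_eq_secular_fun) force+
  moreover have "\<forall>j\<in>{1..d}. (\<eta> * lam j)^2 < forcing_ratio \<beta> (\<eta> * lam j) r" using above by blast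
  note secular_root_compare_1[OF assms(1-3) a \<open>\<beta> < r\<close> this root]
  ultimately show ?thesis by (cases "\<eta> * lam 1 < 1 - \<beta>^2") simp_all
qed

theorem theoremA2:
  fixes d :: nat and \<eta> \<beta> :: real and lam :: "nat \<Rightarrow> real"
  assumes "d \<ge> 1" and "\<eta> > 0" and "0 \<le> \<beta>" and "\<beta> < 1"
    and "\<And>i j. 1 \<le> i \<Longrightarrow> i \<le> j \<Longrightarrow> j \<le> d \<Longrightarrow> lam j \<le> lam i"
    and "lam d > 0"
  shows "(\<forall>W \<in> psd_cone d. T_op \<eta> \<beta> d lam W \<in> psd_cone d)
    \<and> (\<exists>Ws \<in> psd_cone d. (\<exists>i. Ws i \<noteq> 0)
         \<and> T_op \<eta> \<beta> d lam Ws = (\<lambda>i. spectral_radius_T \<eta> \<beta> d lam *\<^sub>R Ws i)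
         \<and> (\<Sum>i=1..d. Ws i $ 1 $ 1) > 0)
    \<and> spectral_radius_T \<eta> \<beta> d lam \<ge> \<eta>^2 * (\<Sum>i=1..d. (lam i)^2)
    \<and> \<eta>^2 * (\<Sum>i=1..d. (lam i)^2) > 0
    \<and> (spectral_radius_T \<eta> \<beta> d lam = 1 \<longleftrightarrow>
         \<eta> * lam 1 < 1 - \<beta>^2 \<and> S_fun \<eta> \<beta> d lam = 1)
    \<and> (spectral_radius_T \<eta> \<beta> d lam < 1 \<longleftrightarrow>
         \<eta> * lam 1 < 1 - \<beta>^2 \<and> S_fun \<eta> \<beta> d lam < 1)"
proof -
  let ?a = "\<lambda>j. \<eta> * lam j"
  have lam: "0 < lam j" "lam j \<le> lam 1" if "j \<in> {1..d}" for j
    using assms(5)[of j d] assms(5)[of 1 j] assms(6) that by auto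
  then have a: "0 < ?a j \<and> ?a j \<le> ?a 1" if "j \<in> {1..d}" for j
    using that assms(2) by simp
  obtain r where "\<beta> < r" and above: "\<And>j. j \<in> {1..d} \<Longrightarrow> (?a j)^2 < forcing_ratio \<beta> (?a j) r"
    and root: "secular_fun \<beta> d ?a r = 1"
    using secular_fun_root_exists[of d \<beta> ?a] assms(1,3,4) a by blast
  note V = eigen_tuple_at_secular_root[OF assms(2,3) \<open>\<beta> < r\<close> above root]
  have "eigen_tuple \<eta> \<beta> d lam r 1 \<noteq> 0" using V(4) assms(1) by force
  moreover have "0 < (\<Sum>i=1..d. eigen_tuple \<eta> \<beta> d lam r i $ 1 $ 1)"
    using V(4) assms(1) by (intro sum_pos) auto
  moreover have "\<eta>^2 * (\<Sum>i=1..d. (lam i)^2) \<le> r"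
    using sum_sq_le_secular_root[of \<beta> r d ?a] above root \<open>\<beta> < r\<close> assms(3)
    by (simp add: sum_distrib_left power_mult_distrib)
  moreover have "0 < \<eta>^2 * (\<Sum>i=1..d. (lam i)^2)"
    using assms(1,2) by (intro mult_pos_pos sum_pos zero_less_power lam(1)) auto
  moreover note spectral_radius_T_eq_secular_root[OF assms(1-3) \<open>\<beta> < r\<close> above root]
    secular_root_compare_S_fun[OF assms(1,3,4) a \<open>\<beta> < r\<close> above root]
  ultimately show ?thesis
    using T_op_psd_cone V(1,2)
    by (intro conjI ballI bexI[of _ "eigen_tuple \<eta> \<beta> d lam r"] exI[of _ 1]) auto
qed

end
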